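(* Let $G$ be a graph with no isolated vertices and let $\{u_1,\dots,u_k\}$, $k\ge4$, be a clique of $G$ such that $G-\{u_1,\dots,u_k\}$ has no isolated vertices. Then $b_{tR}(G)\le \sum_{i=1}^k \deg(u_i)-\frac{k(k+1)}{2}$.
   Context: A TRDF on $G=(V,E)$ is a function $f:V\to\{0,1,2\}$ such that every $v$ with $f(v)=0$ has a neighbor $u$ with $f(u)=2$ and the subgraph induced by $\{v:f(v)>0\}$ has no isolated vertices; $\gamma_{tR}(G)$ is its minimum weight. $b_{tR}(G)$ is the minimum $|E'|$ such that $G-E'$ has no isolated vertices and $\gamma_{tR}(G-E')>\gamma_{tR}(G)$ ($\infty$ if none). A clique is a set of pairwise adjacent vertices. *)

theory Defs
  imports Main "HOL-Library.Extended_Nat"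
begin

definition simple_graph :: "'a set \<Rightarrow> 'a set set \<Rightarrow> bool" where
  "simple_graph V E \<longleftrightarrow> finite V \<and> (\<forall>e\<in>E. e \<subseteq> V \<and> card e = 2)"

definition deg :: "'a set set \<Rightarrow> 'a \<Rightarrow> nat" where
  "deg E v = card {e\<in>E. v \<in> e}"

definition no_isolated :: "'a set \<Rightarrow> 'a set set \<Rightarrow> bool" where
  "no_isolated V E \<longleftrightarrow> (\<forall>v\<in>V. \<exists>u\<in>V. {u, v} \<in> E)"

definition is_clique :: "'a set \<Rightarrow> 'a set set \<Rightarrow> 'a set \<Rightarrow> bool" where
  "is_clique V E S \<longleftrightarrow> S \<subseteq> V \<and> (\<forall>u\<in>S. \<forall>v\<in>S. u \<noteq> v \<longrightarrow> {u, v} \<in> E)"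

text \<open>G - S: the subgraph induced by V - S.\<close>
definition del_verts_V :: "'a set \<Rightarrow> 'a set \<Rightarrow> 'a set" where
  "del_verts_V V S = V - S"

definition del_verts_E :: "'a set set \<Rightarrow> 'a set \<Rightarrow> 'a set set" where
  "del_verts_E E S = {e\<in>E. e \<inter> S = {}}"

definition is_TRDF :: "'a set \<Rightarrow> 'a set set \<Rightarrow> ('a \<Rightarrow> nat) \<Rightarrow> bool" where
  "is_TRDF V E f \<longleftrightarrow>
     (\<forall>v\<in>V. f v \<le> 2) \<and>
     (\<forall>v\<in>V. f v = 0 \<longrightarrow> (\<exists>u\<in>V. {u, v} \<in> E \<and> f u = 2)) \<and>
     (\<forall>v\<in>V. f v > 0 \<longrightarrow> (\<exists>u\<in>V. {u, v} \<in> E \<and> f u > 0))"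

definition weight :: "'a set \<Rightarrow> ('a \<Rightarrow> nat) \<Rightarrow> nat" where
  "weight V f = (\<Sum>v\<in>V. f v)"

definition gamma_tR :: "'a set \<Rightarrow> 'a set set \<Rightarrow> nat" where
  "gamma_tR V E = Inf {weight V f | f. is_TRDF V E f}"

text \<open>Total Roman bondage number; Inf of the empty set of enat is \<infinity>.\<close>
definition b_tR :: "'a set \<Rightarrow> 'a set set \<Rightarrow> enat" where
  "b_tR V E = Inf {enat (card E') | E'. E' \<subseteq> E \<and> no_isolated V (E - E')
                     \<and> gamma_tR V (E - E') > gamma_tR V E}"

end

theory Submission
  imports Defs
begin

text \<open>Fix two clique vertices a1, a2 and delete every edge at the clique except those
  joining a1 and a2 to the other k - 2 clique vertices. Double counting shows that at most
  \<open>\<Sum> deg - k(k-1)/2 - 2(k-2) \<le> \<Sum> deg - k(k+1)/2\<close> edges are deleted, and no vertex becomes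
  isolated. Afterwards the clique spans a separate copy of K(2, k - 2), which has no
  vertex adjacent to all others, so every TRDF spends at least 4 on it. In G, however,
  a1 is adjacent to the whole clique, so the labels 2 on a1, 1 on a2 and 0 on the rest of
  the clique, combined with an optimal TRDF of the reduced graph elsewhere, cost only 3
  there. Hence \<open>\<gamma>\<^sub>t\<^sub>R\<close> strictly increases.\<close>

definition edges_meeting :: "'a set set \<Rightarrow> 'a set \<Rightarrow> 'a set set" where
  "edges_meeting E S = {e\<in>E. e \<inter> S \<noteq> {}}"

definition cross_edges :: "'a set \<Rightarrow> 'a set \<Rightarrow> 'a set set" where
  "cross_edges A B = {{a, b} | a b. a \<in> A \<and> b \<in> B}"

definition clique_cut :: "'a set set \<Rightarrow> 'a set \<Rightarrow> 'a set \<Rightarrow> 'a set set" where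
  "clique_cut E S A = edges_meeting E S - cross_edges A (S - A)"

definition reduce_clique :: "'a set set \<Rightarrow> 'a set \<Rightarrow> 'a set \<Rightarrow> 'a set set" where
  "reduce_clique E S A = del_verts_E E S \<union> cross_edges A (S - A)"

lemma simple_graph_finite_edges:
  assumes "simple_graph V E"
  shows "finite E"
proof -
  have "E \<subseteq> Pow V" using assms by (auto simp: simple_graph_def)
  moreover have "finite V" using assms by (simp add: simple_graph_def)
  ultimately show ?thesis by (meson finite_Pow_iff finite_subset)
qed

lemma card_cross_edges:
  assumes "finite A" "finite B" "A \<inter> B = {}"
  shows "card (cross_edges A B) = card A * card B"
proof -
  have "cross_edges A B = (\<lambda>(a, b). {a, b}) ` (A \<times> B)"
    by (auto simp: cross_edges_def)
  moreover have "inj_on (\<lambda>(a, b). {a, b}) (A \<times> B)"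
    using assms(3) by (auto simp: inj_on_def doubleton_eq_iff)
  ultimately show ?thesis
    using assms(1,2) by (simp add: card_image card_cartesian_product)
qed

lemma sum_deg_eq_sum_card_Int:
  assumes "finite E" "finite S"
  shows "(\<Sum>u\<in>S. deg E u) = (\<Sum>e\<in>E. card (e \<inter> S))"
proof -
  have "(\<Sum>u\<in>S. deg E u) = (\<Sum>u\<in>S. \<Sum>e\<in>E. if u \<in> e then 1 else 0)"
    using assms(1) by (intro sum.cong) (simp_all add: deg_def sum.If_cases Int_def)
  also have "\<dots> = (\<Sum>e\<in>E. \<Sum>u\<in>S. if u \<in> e then 1 else 0)"
    by (rule sum.swap)
  also have "\<dots> = (\<Sum>e\<in>E. card (e \<inter> S))"
    using assms(2) by (intro sum.cong) (simp_all add: sum.If_cases Int_commute)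
  finally show ?thesis .
qed

text \<open>Every edge meeting the clique counts once, and the edges inside it a second time.\<close>
lemma card_edges_meeting_clique_le_sum_deg:
  assumes "simple_graph V E" "is_clique V E S"
  shows "card (edges_meeting E S) + card S * (card S - 1) div 2 \<le> (\<Sum>u\<in>S. deg E u)"
proof -
  define X where "X = edges_meeting E S"
  define P where "P = {e. e \<subseteq> S \<and> card e = 2}"
  have finE: "finite E" using assms(1) by (rule simple_graph_finite_edges)
  have finS: "finite S"
    using assms by (meson is_clique_def simple_graph_def finite_subset)
  have finX: "finite X" using finE by (simp add: X_def edges_meeting_def)
  have "card P = card S * (card S - 1) div 2"
    using n_subsets[OF finS, of 2] by (simp add: P_def choose_two)
  have PX: "P \<subseteq> X"
  proof
    fix e assume "e \<in> P"
    then obtain x y where "e = {x, y}" "x \<noteq> y" "e \<subseteq> S"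
      by (auto simp: P_def card_2_iff)
    then show "e \<in> X"
      using assms(2) by (auto simp: X_def edges_meeting_def is_clique_def)
  qed
  have "card X + card P = (\<Sum>e\<in>X. 1 + (if e \<in> P then 1 else 0))"
    using finX PX by (subst sum.distrib) (simp add: sum.If_cases Int_absorb1)
  also have "\<dots> \<le> (\<Sum>e\<in>X. card (e \<inter> S))"
  proof (rule sum_mono)
    fix e assume e: "e \<in> X"
    have "finite e"
      using e assms(1) by (auto simp: X_def edges_meeting_def simple_graph_def intro: card_ge_0_finite)
    then have "1 \<le> card (e \<inter> S)"
      using e by (auto simp: X_def edges_meeting_def Suc_le_eq card_gt_0_iff)
    moreover have "card (e \<inter> S) = 2" if "e \<in> P"
      using that by (simp add: P_def Int_absorb2)
    ultimately show "1 + (if e \<in> P then 1 else 0) \<le> card (e \<inter> S)" by auto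
  qed
  also have "\<dots> \<le> (\<Sum>e\<in>E. card (e \<inter> S))"
    using finE by (intro sum_mono2) (auto simp: X_def edges_meeting_def)
  also have "\<dots> = (\<Sum>u\<in>S. deg E u)"
    using finE finS by (rule sum_deg_eq_sum_card_Int[symmetric])
  finally show ?thesis
    using \<open>card P = _\<close> by (simp add: X_def)
qed

lemma gamma_tR_le_weight:
  assumes "is_TRDF V E f"
  shows "gamma_tR V E \<le> weight V f"
  unfolding gamma_tR_def using assms by (intro cInf_lower) auto

lemma gamma_tR_attained:
  assumes "no_isolated V E"
  obtains f where "is_TRDF V E f" "weight V f = gamma_tR V E"
proof -
  have "is_TRDF V E (\<lambda>_. 1)"
    using assms by (auto simp: is_TRDF_def no_isolated_def)
  then have "gamma_tR V E \<in> {weight V f | f. is_TRDF V E f}"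
    unfolding gamma_tR_def by (intro Inf_nat_def1) auto
  then show ?thesis using that by auto
qed

lemma b_tR_le_card:
  assumes "E' \<subseteq> E" "no_isolated V (E - E')" "gamma_tR V E < gamma_tR V (E - E')"
  shows "b_tR V E \<le> enat (card E')"
  unfolding b_tR_def using assms by (intro Inf_lower) auto

lemma is_TRDF_restrict:
  assumes f: "is_TRDF V E f" and "S \<subseteq> V" and closed: "\<forall>e\<in>E. e \<inter> S \<noteq> {} \<longrightarrow> e \<subseteq> S"
  shows "is_TRDF S E f"
proof -
  have nbr: "u \<in> S" if "{u, v} \<in> E" "v \<in> S" for u v
    using closed that by (metis disjoint_iff insertCI insert_subset)
  show ?thesis
    unfolding is_TRDF_def
  proof (intro conjI ballI impI)
    fix v assume "v \<in> S"
    then show "f v \<le> 2" using f \<open>S \<subseteq> V\<close> by (auto simp: is_TRDF_def)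
  next
    fix v assume v: "v \<in> S" "f v = 0"
    then obtain u where "{u, v} \<in> E" "f u = 2"
      using f \<open>S \<subseteq> V\<close> by (force simp: is_TRDF_def)
    then show "\<exists>u\<in>S. {u, v} \<in> E \<and> f u = 2" using nbr v(1) by blast
  next
    fix v assume v: "v \<in> S" "0 < f v"
    then obtain u where "{u, v} \<in> E" "0 < f u"
      using f \<open>S \<subseteq> V\<close> by (force simp: is_TRDF_def)
    then show "\<exists>u\<in>S. {u, v} \<in> E \<and> 0 < f u" using nbr v(1) by blast
  qed
qed

text \<open>A vertex of label 2 needs a positive neighbour and a non-neighbour, which is
  labelled positively or else dominated by a second vertex of label 2; without
  any label 2 all labels are positive.\<close>
lemma four_le_weight_TRDF_no_universal_vertex:
  assumes "is_TRDF S E f" "finite S" "card S \<ge> 4" "\<forall>u. {u} \<notin> E"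
    and "\<forall>w\<in>S. \<exists>v\<in>S. v \<noteq> w \<and> {v, w} \<notin> E"
  shows "4 \<le> weight S f"
proof (cases "\<exists>w\<in>S. f w = 2")
  case True
  then obtain w where w: "w \<in> S" "f w = 2" by blast
  obtain v where v: "v \<in> S" "v \<noteq> w" "{v, w} \<notin> E" using assms(5) w(1) by blast
  obtain q where q: "q \<in> S" "{q, w} \<in> E" "0 < f q"
    using assms(1) w by (force simp: is_TRDF_def)
  have "q \<noteq> w" using q(2) assms(4) by auto
  have "q \<noteq> v" using q(2) v(3) by auto
  show ?thesis
  proof (cases "f v = 0")
    case False
    have "f w + f q + f v = sum f {w, q, v}"
      using \<open>q \<noteq> w\<close> \<open>q \<noteq> v\<close> v(2) by simp
    also have "\<dots> \<le> weight S f"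
      unfolding weight_def using assms(2) w(1) q(1) v(1) by (intro sum_mono2) auto
    finally show ?thesis using w(2) q(3) False by linarith
  next
    case True
    then obtain w' where w': "w' \<in> S" "{w', v} \<in> E" "f w' = 2"
      using assms(1) v(1) by (force simp: is_TRDF_def)
    have "w' \<noteq> w" using w'(2) v(3) by (auto simp: insert_commute)
    then have "f w + f w' = sum f {w, w'}" by simp
    also have "\<dots> \<le> weight S f"
      unfolding weight_def using assms(2) w(1) w'(1) by (intro sum_mono2) auto
    finally show ?thesis using w(2) w'(3) by linarith
  qed
next
  case False
  then have "\<forall>v\<in>S. 1 \<le> f v"
    using assms(1) by (metis is_TRDF_def less_one not_le)
  then have "card S \<le> weight S f"
    unfolding weight_def using sum_mono[of S "\<lambda>_. 1" f] by simp
  then show ?thesis using assms(3) by linarith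
qed

definition patch_clique :: "'a set \<Rightarrow> 'a \<Rightarrow> 'a \<Rightarrow> ('a \<Rightarrow> nat) \<Rightarrow> 'a \<Rightarrow> nat" where
  "patch_clique S a1 a2 f v = (if v = a1 then 2 else if v = a2 then 1 else if v \<in> S then 0 else f v)"

lemma is_TRDF_patch_clique:
  assumes f: "is_TRDF V E' f" and "E' \<subseteq> E" and clique: "is_clique V E S"
    and a: "a1 \<in> S" "a2 \<in> S" "a1 \<noteq> a2"
    and closed: "\<forall>e\<in>E'. e \<inter> S \<noteq> {} \<longrightarrow> e \<subseteq> S"
  shows "is_TRDF V E (patch_clique S a1 a2 f)"
proof -
  let ?g = "patch_clique S a1 a2 f"
  have aV: "a1 \<in> V" "a2 \<in> V" using clique a by (auto simp: is_clique_def)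
  have adj: "{u, v} \<in> E" if "u \<in> S" "v \<in> S" "u \<noteq> v" for u v
    using clique that by (simp add: is_clique_def)
  have outside: "u \<notin> S \<and> ?g u = f u" if "{u, v} \<in> E'" "v \<notin> S" for u v
    using closed that a(1,2) by (auto simp: patch_clique_def)
  have same: "?g v = f v" if "v \<notin> S" for v
    using that a(1,2) by (auto simp: patch_clique_def)
  show ?thesis
    unfolding is_TRDF_def
  proof (intro conjI ballI impI)
    fix v assume "v \<in> V"
    then show "?g v \<le> 2" using f by (simp add: patch_clique_def is_TRDF_def)
  next
    fix v assume v: "v \<in> V" "?g v = 0"
    show "\<exists>u\<in>V. {u, v} \<in> E \<and> ?g u = 2"
    proof (cases "v \<in> S")
      case True
      have "v \<noteq> a1" using v(2) by (auto simp: patch_clique_def)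
      then show ?thesis
        using adj[OF a(1) True] aV(1) by (intro bexI[of _ a1]) (auto simp: patch_clique_def)
    next
      case False
      then obtain u where "u \<in> V" "{u, v} \<in> E'" "f u = 2"
        using f v same[of v] unfolding is_TRDF_def by auto
      then show ?thesis using outside[of u v] False \<open>E' \<subseteq> E\<close> by auto
    qed
  next
    fix v assume v: "v \<in> V" "0 < ?g v"
    show "\<exists>u\<in>V. {u, v} \<in> E \<and> 0 < ?g u"
    proof (cases "v \<in> S")
      case True
      then have "v = a1 \<or> v = a2" using v(2) by (auto simp: patch_clique_def split: if_splits)
      then show ?thesis
      proof
        assume "v = a1"
        then show ?thesis
          using adj[OF a(2,1)] a(3) aV(2) by (intro bexI[of _ a2]) (auto simp: patch_clique_def)
      next
        assume "v = a2"
        then show ?thesis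
          using adj[OF a(1,2)] a(3) aV(1) by (intro bexI[of _ a1]) (auto simp: patch_clique_def)
      qed
    next
      case False
      then obtain u where "u \<in> V" "{u, v} \<in> E'" "0 < f u"
        using f v same[of v] unfolding is_TRDF_def by auto
      then show ?thesis using outside[of u v] False \<open>E' \<subseteq> E\<close> by auto
    qed
  qed
qed

lemma weight_patch_clique:
  assumes "finite V" "S \<subseteq> V" "a1 \<in> S" "a2 \<in> S" "a1 \<noteq> a2"
  shows "weight V (patch_clique S a1 a2 f) = weight (V - S) f + 3"
proof -
  let ?g = "patch_clique S a1 a2 f"
  have finS: "finite S" using assms(1,2) by (rule finite_subset[rotated])
  have "weight V ?g = sum ?g (V - S) + sum ?g S"
    unfolding weight_def using assms(2,1) by (rule sum.subset_diff)
  moreover have "sum ?g (V - S) = weight (V - S) f"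
    unfolding weight_def using assms(3,4) by (intro sum.cong) (auto simp: patch_clique_def)
  moreover have "sum ?g S = sum ?g (S - {a1, a2}) + sum ?g {a1, a2}"
    using finS assms(3,4) by (intro sum.subset_diff) auto
  moreover have "sum ?g (S - {a1, a2}) = 0"
    by (intro sum.neutral) (auto simp: patch_clique_def)
  moreover have "sum ?g {a1, a2} = 3"
    using assms(5) by (simp add: patch_clique_def)
  ultimately show ?thesis by simp
qed

lemma cross_edges_subset_clique:
  assumes "is_clique V E S" "A \<subseteq> S"
  shows "cross_edges A (S - A) \<subseteq> E"
proof
  fix e assume "e \<in> cross_edges A (S - A)"
  then obtain a b where "e = {a, b}" "a \<in> A" "b \<in> S - A"
    by (auto simp: cross_edges_def)
  moreover from this have "a \<in> S" "a \<noteq> b" using assms(2) by auto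
  ultimately show "e \<in> E" using assms(1) by (simp add: is_clique_def)
qed

lemma reduce_clique_subset:
  assumes "is_clique V E S" "A \<subseteq> S"
  shows "reduce_clique E S A \<subseteq> E"
  using cross_edges_subset_clique[OF assms] by (auto simp: reduce_clique_def del_verts_E_def)

lemma Diff_clique_cut:
  assumes "is_clique V E S" "A \<subseteq> S"
  shows "E - clique_cut E S A = reduce_clique E S A"
  using cross_edges_subset_clique[OF assms]
  by (auto simp: clique_cut_def reduce_clique_def del_verts_E_def edges_meeting_def)

lemma reduce_clique_closed:
  assumes "A \<subseteq> S"
  shows "\<forall>e\<in>reduce_clique E S A. e \<inter> S \<noteq> {} \<longrightarrow> e \<subseteq> S"
  using assms by (auto simp: reduce_clique_def del_verts_E_def cross_edges_def)

lemma no_isolated_reduce_clique: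
  assumes "no_isolated (del_verts_V V S) (del_verts_E E S)" "S \<subseteq> V"
    and "a \<in> A" "b \<in> S - A" "A \<subseteq> S"
  shows "no_isolated V (reduce_clique E S A)"
  unfolding no_isolated_def
proof
  fix v assume v: "v \<in> V"
  consider "v \<notin> S" | "v \<in> A" | "v \<in> S - A" by blast
  then show "\<exists>u\<in>V. {u, v} \<in> reduce_clique E S A"
  proof cases
    case 1
    then show ?thesis
      using assms(1) v by (auto simp: no_isolated_def del_verts_V_def reduce_clique_def)
  next
    case 2
    have "{b, v} \<in> cross_edges A (S - A)"
      using 2 assms(4) by (auto simp: cross_edges_def insert_commute)
    then show ?thesis using assms(2,4) by (auto simp: reduce_clique_def)
  next
    case 3
    have "{a, v} \<in> cross_edges A (S - A)"
      using 3 assms(3) by (auto simp: cross_edges_def)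
    then show ?thesis using assms(3,5,2) by (auto simp: reduce_clique_def)
  qed
qed

lemma reduce_clique_no_universal_vertex:
  assumes "A \<subseteq> S" "2 \<le> card A" "2 \<le> card (S - A)"
  shows "\<forall>w\<in>S. \<exists>v\<in>S. v \<noteq> w \<and> {v, w} \<notin> reduce_clique E S A"
proof
  have other: "\<exists>v\<in>T. v \<noteq> w" if "2 \<le> card T" for T and w :: 'a
  proof (rule ccontr)
    assume "\<not> (\<exists>v\<in>T. v \<noteq> w)"
    then have "card T \<le> card {w}" by (intro card_mono) auto
    with that show False by simp
  qed
  fix w assume w: "w \<in> S"
  have not_cross: "{v, w} \<notin> cross_edges A (S - A)" if "v \<in> A \<longleftrightarrow> w \<in> A" for v
    using that by (auto simp: cross_edges_def doubleton_eq_iff)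
  have "{v, w} \<notin> del_verts_E E S" for v
    using w by (auto simp: del_verts_E_def)
  moreover obtain v where "v \<in> S" "v \<noteq> w" "v \<in> A \<longleftrightarrow> w \<in> A"
    using other[OF assms(2), of w] other[OF assms(3), of w] assms(1) by (cases "w \<in> A") auto
  ultimately show "\<exists>v\<in>S. v \<noteq> w \<and> {v, w} \<notin> reduce_clique E S A"
    using not_cross by (auto simp: reduce_clique_def)
qed

lemma gamma_tR_lt_reduce_clique:
  assumes G: "simple_graph V E" and clique: "is_clique V E S" and "4 \<le> card S"
    and a: "a1 \<in> S" "a2 \<in> S" "a1 \<noteq> a2"
    and noiso: "no_isolated V (reduce_clique E S {a1, a2})"
  shows "gamma_tR V E < gamma_tR V (reduce_clique E S {a1, a2})"
proof -
  let ?A = "{a1, a2}" and ?R = "reduce_clique E S {a1, a2}"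
  have A: "?A \<subseteq> S" using a by simp
  have finV: "finite V" and SV: "S \<subseteq> V"
    using G clique by (auto simp: simple_graph_def is_clique_def)
  have finS: "finite S" using finV SV by (rule finite_subset[rotated])
  obtain f where f: "is_TRDF V ?R f" "weight V f = gamma_tR V ?R"
    using gamma_tR_attained[OF noiso] by blast
  have "4 \<le> weight S f"
  proof (rule four_le_weight_TRDF_no_universal_vertex)
    show "is_TRDF S ?R f"
      using f(1) SV reduce_clique_closed[OF A] by (rule is_TRDF_restrict)
    show "\<forall>u. {u} \<notin> ?R"
    proof (intro allI notI)
      fix u assume "{u} \<in> ?R"
      then have "card {u} = 2"
        using G reduce_clique_subset[OF clique A] unfolding simple_graph_def by blast
      then show False by simp
    qed
    have "card (S - ?A) = card S - 2"
      using A finS a(3) by (simp add: card_Diff_subset)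
    then show "\<forall>w\<in>S. \<exists>v\<in>S. v \<noteq> w \<and> {v, w} \<notin> ?R"
      using reduce_clique_no_universal_vertex[OF A] a(3) \<open>4 \<le> card S\<close> by simp
  qed (use finS \<open>4 \<le> card S\<close> in auto)
  have "gamma_tR V E \<le> weight V (patch_clique S a1 a2 f)"
    using is_TRDF_patch_clique[OF f(1) reduce_clique_subset[OF clique A] clique a
        reduce_clique_closed[OF A]]
    by (rule gamma_tR_le_weight)
  also have "\<dots> = weight (V - S) f + 3"
    using finV SV a by (rule weight_patch_clique)
  also have "\<dots> < weight (V - S) f + weight S f"
    using \<open>4 \<le> weight S f\<close> by simp
  also have "\<dots> = weight V f"
    unfolding weight_def using SV finV by (rule sum.subset_diff[symmetric])
  finally show ?thesis using f(2) by simp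
qed

lemma card_clique_cut_le:
  assumes G: "simple_graph V E" and clique: "is_clique V E S"
    and A: "A \<subseteq> S" "card A = 2" and "4 \<le> card S"
  shows "card (clique_cut E S A) \<le> (\<Sum>u\<in>S. deg E u) - card S * (card S + 1) div 2"
proof -
  let ?k = "card S"
  have "S \<subseteq> V" using clique by (simp add: is_clique_def)
  then have finS: "finite S"
    using G finite_subset[OF \<open>S \<subseteq> V\<close>] by (simp add: simple_graph_def)
  have finA: "finite A" using A(1) finS by (rule finite_subset)
  have cross: "cross_edges A (S - A) \<subseteq> edges_meeting E S"
    using cross_edges_subset_clique[OF clique A(1)] A(1)
    by (auto simp: edges_meeting_def cross_edges_def)
  have "card (cross_edges A (S - A)) = 2 * (?k - 2)"
    using card_cross_edges[of A "S - A"] finA finS A by (simp add: card_Diff_subset)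
  moreover have "finite (edges_meeting E S)"
    using simple_graph_finite_edges[OF G] by (simp add: edges_meeting_def)
  ultimately have "card (clique_cut E S A) = card (edges_meeting E S) - 2 * (?k - 2)"
    unfolding clique_cut_def using card_Diff_subset[OF finite_subset[OF cross] cross] by simp
  moreover have "card (edges_meeting E S) + ?k * (?k - 1) div 2 \<le> (\<Sum>u\<in>S. deg E u)"
    using G clique by (rule card_edges_meeting_clique_le_sum_deg)
  moreover have "?k * (?k + 1) div 2 = ?k * (?k - 1) div 2 + ?k"
    using \<open>4 \<le> ?k\<close> by (cases ?k) (auto simp: algebra_simps)
  ultimately show ?thesis using \<open>4 \<le> ?k\<close> by linarith
qed

theorem mainTheorem15:
  fixes V :: "'a set" and E :: "'a set set" and S :: "'a set" and k :: nat
  assumes "simple_graph V E"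
    and "no_isolated V E"
    and "is_clique V E S"
    and "card S = k" and "k \<ge> 4"
    and "no_isolated (del_verts_V V S) (del_verts_E E S)"
  shows "b_tR V E \<le> enat ((\<Sum>u\<in>S. deg E u) - k * (k + 1) div 2)"
proof -
  obtain A where A: "A \<subseteq> S" "card A = 2" "finite A"
    using obtain_subset_with_card_n[of 2 S] assms(4,5) by auto
  then obtain a1 a2 where a: "a1 \<in> S" "a2 \<in> S" "a1 \<noteq> a2" and A_eq: "A = {a1, a2}"
    by (auto simp: card_2_iff)
  have "card (S - A) = k - 2"
    using A assms(4) by (simp add: card_Diff_subset)
  then have "S - A \<noteq> {}" using assms(5) by (intro notI) simp
  then obtain b where "b \<in> S - A" by blast
  have remaining: "E - clique_cut E S A = reduce_clique E S A"
    using assms(3) A(1) by (rule Diff_clique_cut)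
  have "S \<subseteq> V" using assms(3) by (simp add: is_clique_def)
  moreover have "a1 \<in> A" using A_eq by simp
  ultimately have noiso: "no_isolated V (reduce_clique E S A)"
    using no_isolated_reduce_clique[OF assms(6)] \<open>b \<in> S - A\<close> A(1) by blast
  have "gamma_tR V E < gamma_tR V (reduce_clique E S A)"
    using gamma_tR_lt_reduce_clique[OF assms(1,3) _ a] noiso assms(4,5) A_eq by simp
  then have "b_tR V E \<le> enat (card (clique_cut E S A))"
    using noiso remaining by (intro b_tR_le_card) (auto simp: clique_cut_def edges_meeting_def)
  also have "card (clique_cut E S A) \<le> (\<Sum>u\<in>S. deg E u) - k * (k + 1) div 2"
    using card_clique_cut_le[OF assms(1,3) A(1,2)] assms(4,5) by simp
  finally show ?thesis by simp
qed

end
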